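(* $\theta_n(B_n)\asymp\sqrt n$, i.e. there exist constants $c_1,c_2>0$ not depending on $n$ such that $c_1\sqrt n\le\theta_n(B_n)\le c_2\sqrt n$ for all $n\in\mathbb{N}$.
   Context: $B_n=\{x\in\mathbb{R}^n:\|x\|\le1\}$ (Euclidean norm). $C(B_n)$ is the space of continuous real functions on $B_n$ with the max norm; $\Pi_1(\mathbb{R}^n)$ is the set of polynomials in $n$ variables of degree at most $1$. For a nondegenerate simplex $S\subset B_n$ with vertices $x^{(1)},\dots,x^{(n+1)}$, the corresponding interpolation projector $P:C(B_n)\to\Pi_1(\mathbb{R}^n)$ is defined by $Pf(x^{(j)})=f(x^{(j)})$, and $\|P\|_{B_n}$ is its operator norm on $C(B_n)$. $\theta_n(B_n)$ is the minimal value of $\|P\|_{B_n}$ over all nondegenerate simplices with vertices in $B_n$. *)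

theory Defs
  imports Complex_Main
begin

text \<open>Points of R^n are represented as functions nat => real whose coordinates
  with index >= n vanish; the Euclidean norm uses coordinates 0..n-1.\<close>

definition enorm :: "nat \<Rightarrow> (nat \<Rightarrow> real) \<Rightarrow> real" where
  "enorm n x = sqrt (\<Sum>i<n. (x i)\<^sup>2)"

definition unit_ball :: "nat \<Rightarrow> (nat \<Rightarrow> real) set" where
  "unit_ball n = {x. (\<forall>i\<ge>n. x i = 0) \<and> enorm n x \<le> 1}"

definition cont_on_ball :: "nat \<Rightarrow> ((nat \<Rightarrow> real) \<Rightarrow> real) \<Rightarrow> bool" where
  "cont_on_ball n f \<longleftrightarrow>
     (\<forall>x\<in>unit_ball n. \<forall>e>0. \<exists>d>0. \<forall>y\<in>unit_ball n.
        enorm n (\<lambda>i. y i - x i) < d \<longrightarrow> \<bar>f y - f x\<bar> < e)"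

definition supnorm :: "nat \<Rightarrow> ((nat \<Rightarrow> real) \<Rightarrow> real) \<Rightarrow> real" where
  "supnorm n f = Sup ((\<lambda>x. \<bar>f x\<bar>) ` unit_ball n)"

definition poly1 :: "nat \<Rightarrow> ((nat \<Rightarrow> real) \<Rightarrow> real) \<Rightarrow> bool" where
  "poly1 n p \<longleftrightarrow> (\<exists>a0 (a :: nat \<Rightarrow> real). \<forall>x. p x = a0 + (\<Sum>i<n. a i * x i))"

text \<open>A simplex is given by its vertices X 0, ..., X n. Nondegenerate = affinely independent.\<close>
definition nondeg_simplex :: "nat \<Rightarrow> (nat \<Rightarrow> nat \<Rightarrow> real) \<Rightarrow> bool" where
  "nondeg_simplex n X \<longleftrightarrow>
     (\<forall>c :: nat \<Rightarrow> real. (\<Sum>j\<le>n. c j) = 0 \<and> (\<forall>i<n. (\<Sum>j\<le>n. c j * X j i) = 0)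
        \<longrightarrow> (\<forall>j\<le>n. c j = 0))"

definition interp :: "nat \<Rightarrow> (nat \<Rightarrow> nat \<Rightarrow> real) \<Rightarrow> ((nat \<Rightarrow> real) \<Rightarrow> real) \<Rightarrow> ((nat \<Rightarrow> real) \<Rightarrow> real)" where
  "interp n X f = (THE p. poly1 n p \<and> (\<forall>j\<le>n. p (X j) = f (X j)))"

definition proj_norm :: "nat \<Rightarrow> (nat \<Rightarrow> nat \<Rightarrow> real) \<Rightarrow> real" where
  "proj_norm n X = Sup {supnorm n (interp n X f) | f. cont_on_ball n f \<and> supnorm n f \<le> 1}"

definition theta :: "nat \<Rightarrow> real" where
  "theta n = Inf {proj_norm n X | X. (\<forall>j\<le>n. X j \<in> unit_ball n) \<and> nondeg_simplex n X}"

end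

theory Submission
  imports Defs "HOL-Analysis.Function_Topology" "HOL-Analysis.Elementary_Metric_Spaces"
    "HOL-Analysis.L2_Norm" "Jordan_Normal_Form.Determinant"
begin

text \<open>Lower bound: if \<open>\<lambda>\<^sub>0, \<dots>, \<lambda>\<^sub>n\<close> is the Lagrange basis of a simplex in \<open>B\<^sub>n\<close>, each gradient
  \<open>\<nabla>\<lambda>\<^sub>j\<close> has length at least 1/2, because \<open>\<lambda>\<^sub>j\<close> changes by 1 between two points of the ball.
  Choosing the signs \<open>s\<^sub>j = \<plusminus>1\<close> greedily gives \<open>|\<Sum>\<^sub>j s\<^sub>j \<nabla>\<lambda>\<^sub>j|\<^sup>2 \<ge> \<Sum>\<^sub>j |\<nabla>\<lambda>\<^sub>j|\<^sup>2 \<ge> (n+1)/4\<close>.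
  The affine function \<open>p = \<Sum>\<^sub>j s\<^sub>j \<lambda>\<^sub>j\<close> is the interpolant of its clipping to \<open>[-1,1]\<close>, a function of
  norm 1, and on the ball \<open>|p|\<close> reaches the length of its gradient, so \<open>\<parallel>P\<parallel> \<ge> \<surd>n/2\<close>.
  Upper bound: for the simplex \<open>0, e\<^sub>1, \<dots>, e\<^sub>n\<close> the Lebesgue function is
  \<open>|1 - \<Sum>\<^sub>i x\<^sub>i| + \<Sum>\<^sub>i |x\<^sub>i| \<le> 1 + 2\<surd>n\<close> on the ball.\<close>

lemma mem_unit_ball_iff: "x \<in> unit_ball n \<longleftrightarrow> (\<forall>i\<ge>n. x i = 0) \<and> (\<Sum>i<n. (x i)\<^sup>2) \<le> 1"
  by (simp add: unit_ball_def enorm_def)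

lemma enorm_eq_L2_set: "enorm n x = L2_set x {..<n}"
  by (simp add: enorm_def L2_set_def)

lemma zero_mem_unit_ball: "(\<lambda>i. 0) \<in> unit_ball n"
  by (simp add: mem_unit_ball_iff)

lemma abs_coord_le_1: assumes "x \<in> unit_ball n" shows "\<bar>x i\<bar> \<le> 1"
proof (cases "i < n")
  case True
  have "(x i)\<^sup>2 \<le> (\<Sum>i<n. (x i)\<^sup>2)"
    by (rule member_le_sum) (use True in auto)
  also have "\<dots> \<le> 1" using assms by (simp add: mem_unit_ball_iff)
  finally show ?thesis by (simp add: abs_square_le_1)
next
  case False then show ?thesis using assms by (simp add: mem_unit_ball_iff)
qed

lemma compact_unit_ball: "compact (unit_ball n)"
proof -
  let ?cube = "PiE UNIV (\<lambda>i::nat. {-1..1::real})"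
  have "compact ?cube"
    using compactin_PiE[of "\<lambda>i. euclidean" UNIV "\<lambda>i::nat. {-1..1::real}"]
    by (simp add: euclidean_product_topology)
  have eq: "unit_ball n = (\<Inter>i\<in>{n..}. {x. x i = 0}) \<inter> {x. (\<Sum>i<n. (x i)\<^sup>2) \<le> 1}"
    by (auto simp: mem_unit_ball_iff)
  have "closed (unit_ball n)"
    unfolding eq by (intro closed_Int closed_INT ballI closed_Collect_eq closed_Collect_le
        continuous_intros continuous_on_product_coordinates)
  then have "compact (unit_ball n \<inter> ?cube)"
    using \<open>compact ?cube\<close> by (rule closed_Int_compact)
  moreover have "unit_ball n \<subseteq> ?cube"
    using abs_coord_le_1 by (fastforce simp: PiE_iff abs_le_iff)
  ultimately show ?thesis by (simp add: Int_absorb2)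
qed

text \<open>The Euclidean distance only reads the coordinates below \<open>n\<close>, so a basic open set of the
  product topology on \<open>nat \<Rightarrow> real\<close> constraining those coordinates is a Euclidean neighbourhood.\<close>
lemma cont_on_ball_imp_continuous_on:
  assumes "cont_on_ball n f" shows "continuous_on (unit_ball n) f"
  unfolding continuous_on_topological
proof (intro ballI allI impI)
  fix x B assume x: "x \<in> unit_ball n" and B: "open B" "f x \<in> B"
  obtain e where e: "e > 0" "ball (f x) e \<subseteq> B" using B openE by blast
  obtain d where d: "d > 0"
    "\<And>y. y \<in> unit_ball n \<Longrightarrow> enorm n (\<lambda>i. y i - x i) < d \<Longrightarrow> \<bar>f y - f x\<bar> < e"
    using assms x e(1) unfolding cont_on_ball_def by blast
  define r where "r = d / (real n + 1)"
  have r: "r > 0" using d by (simp add: r_def)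
  define A where "A = {y. \<forall>i\<in>{..<n}. y ((\<lambda>i. i) i) \<in> ball (x i) r}"
  have "open A" unfolding A_def
    by (rule product_topology_basis') auto
  moreover have "x \<in> A" using r by (simp add: A_def)
  moreover have "f y \<in> B" if y: "y \<in> unit_ball n" "y \<in> A" for y
  proof -
    have "enorm n (\<lambda>i. y i - x i) \<le> (\<Sum>i<n. \<bar>y i - x i\<bar>)"
      unfolding enorm_eq_L2_set by (rule L2_set_le_sum_abs)
    also have "\<dots> \<le> (\<Sum>i<n. r)"
      using y(2) by (intro sum_mono) (auto simp: A_def dist_real_def abs_minus_commute less_imp_le)
    also have "\<dots> < d" using d(1) by (simp add: r_def field_simps)
    finally have "\<bar>f y - f x\<bar> < e" using d(2)[OF y(1)] by simp
    then show ?thesis using e(2) by (auto simp: dist_real_def abs_minus_commute)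
  qed
  ultimately show "\<exists>A. open A \<and> x \<in> A \<and> (\<forall>y\<in>unit_ball n. y \<in> A \<longrightarrow> f y \<in> B)" by blast
qed

lemma abs_le_supnorm:
  assumes "\<forall>x\<in>unit_ball n. \<bar>f x\<bar> \<le> K" "y \<in> unit_ball n"
  shows "\<bar>f y\<bar> \<le> supnorm n f"
  unfolding supnorm_def using assms by (intro cSup_upper) (auto intro!: bdd_aboveI2)

lemma supnorm_le: assumes "\<forall>x\<in>unit_ball n. \<bar>f x\<bar> \<le> K" shows "supnorm n f \<le> K"
  unfolding supnorm_def using assms zero_mem_unit_ball by (intro cSup_least) auto

lemma cont_on_ball_abs_le_supnorm:
  assumes "cont_on_ball n f" "y \<in> unit_ball n"
  shows "\<bar>f y\<bar> \<le> supnorm n f"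
proof -
  have "compact (f ` unit_ball n)"
    by (rule compact_continuous_image[OF cont_on_ball_imp_continuous_on[OF assms(1)] compact_unit_ball])
  then obtain K where "\<forall>z\<in>f ` unit_ball n. \<bar>z\<bar> \<le> K"
    using compact_imp_bounded bounded_real by blast
  then show ?thesis using abs_le_supnorm[of n f K] assms(2) by blast
qed

lemma cont_on_ball_clip:
  assumes "cont_on_ball n g"
  shows "cont_on_ball n (\<lambda>x. max (-1) (min 1 (g x)))"
  unfolding cont_on_ball_def
proof (intro ballI allI impI)
  fix x e assume "x \<in> unit_ball n" "(e::real) > 0"
  then obtain d where d: "d > 0" "\<forall>y\<in>unit_ball n. enorm n (\<lambda>i. y i - x i) < d \<longrightarrow> \<bar>g y - g x\<bar> < e"
    using assms unfolding cont_on_ball_def by blast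
  have "\<bar>max (-1) (min 1 (g y)) - max (-1) (min 1 (g x))\<bar> < e"
    if "y \<in> unit_ball n" "enorm n (\<lambda>i. y i - x i) < d" for y
  proof -
    have "\<bar>g y - g x\<bar> < e" using d(2) that by blast
    then show ?thesis by (simp add: abs_less_iff max_def min_def split: if_splits) linarith?
  qed
  with d(1) show "\<exists>d>0. \<forall>y\<in>unit_ball n. enorm n (\<lambda>i. y i - x i) < d \<longrightarrow>
      \<bar>max (-1) (min 1 (g y)) - max (-1) (min 1 (g x))\<bar> < e"
    by blast
qed

definition affine_fun :: "nat \<Rightarrow> real \<Rightarrow> (nat \<Rightarrow> real) \<Rightarrow> (nat \<Rightarrow> real) \<Rightarrow> real" where
  "affine_fun n c0 c x = c0 + (\<Sum>i<n. c i * x i)"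

lemma poly1_affine_fun: "poly1 n (affine_fun n c0 c)"
  unfolding poly1_def affine_fun_def by blast

lemma sum_affine_fun:
  "(\<Sum>j\<le>m. a j * affine_fun n (c0 j) (c j) x)
     = affine_fun n (\<Sum>j\<le>m. a j * c0 j) (\<lambda>i. \<Sum>j\<le>m. a j * c j i) x"
  unfolding affine_fun_def
  by (simp add: algebra_simps sum.distrib sum_distrib_left sum_distrib_right sum.swap[of _ "{..<n}"])

lemma abs_sum_mult_le_L2_set:
  "\<bar>\<Sum>i<n. c i * x i\<bar> \<le> L2_set c {..<n} * L2_set x {..<n}"
proof -
  have "\<bar>\<Sum>i<n. c i * x i\<bar> \<le> (\<Sum>i<n. \<bar>c i\<bar> * \<bar>x i\<bar>)"
    by (metis (no_types, lifting) abs_mult sum.cong sum_abs)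
  also have "\<dots> \<le> L2_set c {..<n} * L2_set x {..<n}" by (rule L2_set_mult_ineq)
  finally show ?thesis .
qed

lemma abs_sum_mult_le_L2_set_unit_ball:
  assumes "x \<in> unit_ball n"
  shows "\<bar>\<Sum>i<n. c i * x i\<bar> \<le> L2_set c {..<n}"
proof -
  have "L2_set c {..<n} * L2_set x {..<n} \<le> L2_set c {..<n} * 1"
    using assms by (intro mult_left_mono) (auto simp: unit_ball_def enorm_eq_L2_set L2_set_nonneg)
  then show ?thesis using abs_sum_mult_le_L2_set[of c x n] by simp
qed

lemma abs_affine_fun_le:
  "x \<in> unit_ball n \<Longrightarrow> \<bar>affine_fun n c0 c x\<bar> \<le> \<bar>c0\<bar> + L2_set c {..<n}"
  unfolding affine_fun_def using abs_sum_mult_le_L2_set_unit_ball[of x n c] by linarith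

lemma cont_on_ball_affine_fun: "cont_on_ball n (affine_fun n c0 c)"
  unfolding cont_on_ball_def
proof (intro ballI allI impI)
  fix x e assume "x \<in> unit_ball n" and e: "(e::real) > 0"
  define K where "K = L2_set c {..<n} + 1"
  have K: "K > 0" by (simp add: K_def L2_set_nonneg add_nonneg_pos)
  have "\<bar>affine_fun n c0 c y - affine_fun n c0 c x\<bar> < e"
    if d: "enorm n (\<lambda>i. y i - x i) < e / K" for y
  proof -
    have "\<bar>affine_fun n c0 c y - affine_fun n c0 c x\<bar> = \<bar>\<Sum>i<n. c i * (y i - x i)\<bar>"
      by (simp add: affine_fun_def algebra_simps sum_subtractf)
    also have "\<dots> \<le> L2_set c {..<n} * enorm n (\<lambda>i. y i - x i)"
      unfolding enorm_eq_L2_set by (rule abs_sum_mult_le_L2_set)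
    also have "\<dots> \<le> K * enorm n (\<lambda>i. y i - x i)"
      by (intro mult_right_mono) (auto simp: K_def enorm_def intro: sum_nonneg)
    also have "\<dots> < K * (e / K)" by (rule mult_strict_left_mono) (use d K in auto)
    finally show ?thesis using K by simp
  qed
  moreover have "e / K > 0" using e K by simp
  ultimately show "\<exists>d>0. \<forall>y\<in>unit_ball n. enorm n (\<lambda>i. y i - x i) < d \<longrightarrow>
      \<bar>affine_fun n c0 c y - affine_fun n c0 c x\<bar> < e"
    by blast
qed

lemma affine_fun_at_normalized_gradient:
  assumes r: "L2_set c {..<n} > 0" and \<sigma>: "\<bar>\<sigma>\<bar> = 1"
  defines "y \<equiv> \<lambda>i. if i < n then \<sigma> * c i / L2_set c {..<n} else 0"
  shows "y \<in> unit_ball n" "affine_fun n c0 c y = c0 + \<sigma> * L2_set c {..<n}"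
proof -
  let ?r = "L2_set c {..<n}"
  have r2: "(\<Sum>i<n. (c i)\<^sup>2) = ?r\<^sup>2" by (simp add: L2_set_def sum_nonneg)
  have "\<sigma>\<^sup>2 = 1" using \<sigma> abs_mult_self_eq[of \<sigma>] by (simp add: power2_eq_square)
  have "(\<Sum>i<n. (y i)\<^sup>2) = (\<Sum>i<n. \<sigma>\<^sup>2 * (c i)\<^sup>2 / ?r\<^sup>2)"
    by (intro sum.cong) (auto simp: y_def power_divide power_mult_distrib)
  also have "\<dots> = 1" using r r2 \<open>\<sigma>\<^sup>2 = 1\<close> by (simp add: sum_divide_distrib[symmetric])
  finally show "y \<in> unit_ball n" by (simp add: mem_unit_ball_iff y_def)
  have "(\<Sum>i<n. c i * y i) = \<sigma> * (\<Sum>i<n. (c i)\<^sup>2) / ?r"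
    by (simp add: y_def sum_distrib_left sum_divide_distrib power2_eq_square algebra_simps)
  then show "affine_fun n c0 c y = c0 + \<sigma> * ?r"
    using r r2 by (simp add: affine_fun_def power2_eq_square)
qed

lemma L2_set_le_supnorm_affine_fun: "L2_set c {..<n} \<le> supnorm n (affine_fun n c0 c)"
proof -
  let ?r = "L2_set c {..<n}"
  have bound: "\<forall>x\<in>unit_ball n. \<bar>affine_fun n c0 c x\<bar> \<le> \<bar>c0\<bar> + ?r"
    using abs_affine_fun_le by blast
  show ?thesis
  proof (cases "?r = 0")
    case True
    have "0 \<le> \<bar>affine_fun n c0 c (\<lambda>i. 0)\<bar>" by simp
    also have "\<dots> \<le> supnorm n (affine_fun n c0 c)"
      by (rule abs_le_supnorm[OF bound zero_mem_unit_ball])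
    finally show ?thesis using True by simp
  next
    case False
    then have r: "?r > 0" using L2_set_nonneg[of c "{..<n}"] by linarith
    have "\<bar>c0 + \<sigma> * ?r\<bar> \<le> supnorm n (affine_fun n c0 c)" if "\<bar>\<sigma>\<bar> = 1" for \<sigma>
      using abs_le_supnorm[OF bound affine_fun_at_normalized_gradient(1)[OF r that]]
        affine_fun_at_normalized_gradient(2)[OF r that, of c0] by simp
    from this[of 1] this[of "-1"] show ?thesis by linarith
  qed
qed

section \<open>Affine interpolation on a nondegenerate simplex\<close>

text \<open>Row \<open>j\<close> of the vertex matrix is \<open>(1, X j)\<close>; nondegeneracy says its rows are linearly
  independent, and affine interpolation amounts to solving a linear system with this matrix.\<close>
definition vertex_matrix :: "nat \<Rightarrow> (nat \<Rightarrow> nat \<Rightarrow> real) \<Rightarrow> real mat" where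
  "vertex_matrix n X = mat (Suc n) (Suc n) (\<lambda>(j,k). if k = 0 then 1 else X j (k - 1))"

lemma vertex_matrix_carrier: "vertex_matrix n X \<in> carrier_mat (Suc n) (Suc n)"
  by (simp add: vertex_matrix_def)

lemma vertex_matrix_mult_vec:
  assumes "w \<in> carrier_vec (Suc n)" "j \<le> n"
  shows "(vertex_matrix n X *\<^sub>v w) $ j = affine_fun n (w $ 0) (\<lambda>i. w $ Suc i) (X j)"
proof -
  have "(vertex_matrix n X *\<^sub>v w) $ j = (\<Sum>k<Suc n. (if k = 0 then 1 else X j (k - 1)) * w $ k)"
    using assms by (simp add: vertex_matrix_def scalar_prod_def atLeast0LessThan)
  also have "\<dots> = affine_fun n (w $ 0) (\<lambda>i. w $ Suc i) (X j)"
    by (subst sum.lessThan_Suc_shift) (simp add: affine_fun_def mult.commute)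
  finally show ?thesis .
qed

lemma transpose_vertex_matrix_mult_vec:
  assumes "w \<in> carrier_vec (Suc n)" "k \<le> n"
  shows "(transpose_mat (vertex_matrix n X) *\<^sub>v w) $ k
           = (\<Sum>j\<le>n. w $ j * (if k = 0 then 1 else X j (k - 1)))"
  using assms
  by (simp add: vertex_matrix_def scalar_prod_def atLeast0LessThan lessThan_Suc_atMost mult.commute)

lemma det_vertex_matrix_nonzero:
  assumes nd: "nondeg_simplex n X" shows "det (vertex_matrix n X) \<noteq> 0"
proof
  let ?M = "transpose_mat (vertex_matrix n X)"
  assume "det (vertex_matrix n X) = 0"
  then have "det ?M = 0" by (simp add: det_transpose[OF vertex_matrix_carrier])
  then obtain v where v: "v \<in> carrier_vec (Suc n)" "v \<noteq> 0\<^sub>v (Suc n)" "?M *\<^sub>v v = 0\<^sub>v (Suc n)"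
    using det_0_iff_vec_prod_zero[of ?M "Suc n"] vertex_matrix_carrier by auto
  have "(?M *\<^sub>v v) $ 0 = 0" using v(3) by simp
  then have "(\<Sum>j\<le>n. v $ j) = 0" using transpose_vertex_matrix_mult_vec[OF v(1), of 0] by simp
  moreover have "(\<Sum>j\<le>n. v $ j * X j i) = 0" if "i < n" for i
  proof -
    have "(?M *\<^sub>v v) $ Suc i = 0" using v(3) that by simp
    then show ?thesis using transpose_vertex_matrix_mult_vec[OF v(1), of "Suc i" X] that by simp
  qed
  ultimately have "\<forall>j\<le>n. v $ j = 0" using nd unfolding nondeg_simplex_def by blast
  then have "v = 0\<^sub>v (Suc n)" using v(1) by (intro eq_vecI) (auto simp: less_Suc_eq_le)
  with v(2) show False by simp
qed

lemma affine_fun_vanishing_on_simplex: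
  assumes nd: "nondeg_simplex n X" and zero: "\<forall>j\<le>n. affine_fun n c0 c (X j) = 0"
  shows "c0 = 0 \<and> (\<forall>i<n. c i = 0)"
proof -
  define w where "w = vec (Suc n) (\<lambda>k. if k = 0 then c0 else c (k - 1))"
  have w: "w \<in> carrier_vec (Suc n)" by (simp add: w_def)
  have "vertex_matrix n X *\<^sub>v w = 0\<^sub>v (Suc n)"
  proof (rule eq_vecI)
    fix j assume "j < dim_vec (0\<^sub>v (Suc n) :: real vec)"
    then have j: "j \<le> n" by simp
    have "affine_fun n (w $ 0) (\<lambda>i. w $ Suc i) = affine_fun n c0 c"
      by (intro ext) (simp add: w_def affine_fun_def)
    then show "(vertex_matrix n X *\<^sub>v w) $ j = 0\<^sub>v (Suc n) $ j"
      using vertex_matrix_mult_vec[OF w j, of X] zero j by simp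
  qed (simp add: vertex_matrix_def)
  then have "w = 0\<^sub>v (Suc n)"
    using det_0_iff_vec_prod_zero[of "vertex_matrix n X" "Suc n"] vertex_matrix_carrier
      det_vertex_matrix_nonzero[OF nd] w by blast
  then have "\<forall>k<Suc n. w $ k = 0" by simp
  then show ?thesis by (auto simp: w_def)
qed

lemma affine_interpolant_exists:
  assumes nd: "nondeg_simplex n X"
  shows "\<exists>c0 c. \<forall>j\<le>n. affine_fun n c0 c (X j) = v j"
proof -
  have "vertex_matrix n X \<in> Units (ring_mat TYPE(real) (Suc n) ())"
    by (rule det_non_zero_imp_unit[OF vertex_matrix_carrier det_vertex_matrix_nonzero[OF nd]])
  then obtain B where B: "B \<in> carrier_mat (Suc n) (Suc n)" "vertex_matrix n X * B = 1\<^sub>m (Suc n)"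
    unfolding Units_def ring_mat_def by auto
  define w where "w = B *\<^sub>v vec (Suc n) v"
  have w: "w \<in> carrier_vec (Suc n)" using B by (simp add: w_def)
  have "vertex_matrix n X *\<^sub>v w = vec (Suc n) v"
    unfolding w_def using B vertex_matrix_carrier
    by (subst assoc_mult_mat_vec[symmetric, of _ "Suc n" "Suc n" _ "Suc n"]) auto
  then have "\<forall>j\<le>n. affine_fun n (w $ 0) (\<lambda>i. w $ Suc i) (X j) = v j"
    using vertex_matrix_mult_vec[OF w] by (metis index_vec less_Suc_eq_le)
  then show ?thesis by blast
qed

lemma interp_eqI:
  assumes nd: "nondeg_simplex n X" and p: "poly1 n p" and agree: "\<forall>j\<le>n. p (X j) = f (X j)"
  shows "interp n X f = p"
  unfolding interp_def
proof (rule the_equality)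
  show "poly1 n p \<and> (\<forall>j\<le>n. p (X j) = f (X j))" using p agree by blast
next
  fix q assume q: "poly1 n q \<and> (\<forall>j\<le>n. q (X j) = f (X j))"
  obtain a0 a where a: "p = affine_fun n a0 a"
    using p unfolding poly1_def affine_fun_def by blast
  obtain b0 b where b: "q = affine_fun n b0 b"
    using q unfolding poly1_def affine_fun_def by blast
  have "\<forall>j\<le>n. affine_fun n (b0 - a0) (\<lambda>i. b i - a i) (X j) = 0"
    using q agree by (simp add: a b affine_fun_def algebra_simps sum_subtractf)
  from affine_fun_vanishing_on_simplex[OF nd this] have "b0 = a0" "\<forall>i<n. b i = a i" by auto
  then show "q = p" by (auto simp: a b affine_fun_def intro!: sum.cong)
qed

section \<open>Lagrange basis and the norm of the projector\<close>

definition lagrange_basis ::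
    "nat \<Rightarrow> (nat \<Rightarrow> nat \<Rightarrow> real) \<Rightarrow> (nat \<Rightarrow> real) \<Rightarrow> (nat \<Rightarrow> nat \<Rightarrow> real) \<Rightarrow> bool" where
  "lagrange_basis n X L0 L \<longleftrightarrow>
     (\<forall>j\<le>n. \<forall>k\<le>n. affine_fun n (L0 j) (L j) (X k) = (if k = j then 1 else 0))"

lemma lagrange_basis_exists:
  assumes "nondeg_simplex n X" shows "\<exists>L0 L. lagrange_basis n X L0 L"
proof -
  have "\<forall>j. \<exists>c0 c. \<forall>k\<le>n. affine_fun n c0 c (X k) = (if k = j then 1 else 0)"
    by (intro allI affine_interpolant_exists[OF assms])
  then show ?thesis unfolding lagrange_basis_def by metis
qed

lemma sum_lagrange_basis_at_vertex:
  assumes "lagrange_basis n X L0 L" "k \<le> n"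
  shows "(\<Sum>j\<le>n. a j * affine_fun n (L0 j) (L j) (X k)) = a k"
proof -
  have "(\<Sum>j\<le>n. a j * affine_fun n (L0 j) (L j) (X k)) = (\<Sum>j\<le>n. if j = k then a j else 0)"
    using assms by (intro sum.cong) (auto simp: lagrange_basis_def)
  then show ?thesis using assms(2) by simp
qed

lemma interp_lagrange:
  assumes "nondeg_simplex n X" "lagrange_basis n X L0 L"
  shows "interp n X f = (\<lambda>x. \<Sum>j\<le>n. f (X j) * affine_fun n (L0 j) (L j) x)"
proof (rule interp_eqI[OF assms(1)])
  show "poly1 n (\<lambda>x. \<Sum>j\<le>n. f (X j) * affine_fun n (L0 j) (L j) x)"
    unfolding sum_affine_fun by (rule poly1_affine_fun)
  show "\<forall>k\<le>n. (\<Sum>j\<le>n. f (X j) * affine_fun n (L0 j) (L j) (X k)) = f (X k)"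
    by (intro allI impI sum_lagrange_basis_at_vertex[OF assms(2)])
qed

lemma supnorm_interp_le_lebesgue_bound:
  assumes nd: "nondeg_simplex n X" and vertices: "\<forall>j\<le>n. X j \<in> unit_ball n"
    and L: "lagrange_basis n X L0 L"
    and K: "\<forall>x\<in>unit_ball n. (\<Sum>j\<le>n. \<bar>affine_fun n (L0 j) (L j) x\<bar>) \<le> K"
    and f: "cont_on_ball n f" "supnorm n f \<le> 1"
  shows "supnorm n (interp n X f) \<le> K"
proof (rule supnorm_le, intro ballI)
  fix x assume x: "x \<in> unit_ball n"
  have fX: "\<bar>f (X j)\<bar> \<le> 1" if "j \<le> n" for j
    using cont_on_ball_abs_le_supnorm[OF f(1)] vertices that f(2) by (meson order_trans)
  have "\<bar>interp n X f x\<bar> \<le> (\<Sum>j\<le>n. \<bar>f (X j) * affine_fun n (L0 j) (L j) x\<bar>)"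
    unfolding interp_lagrange[OF nd L] by (rule sum_abs)
  also have "\<dots> \<le> (\<Sum>j\<le>n. \<bar>affine_fun n (L0 j) (L j) x\<bar>)"
    by (intro sum_mono) (auto simp: abs_mult intro!: mult_left_le_one_le fX)
  also have "\<dots> \<le> K" using K x by blast
  finally show "\<bar>interp n X f x\<bar> \<le> K" .
qed

lemma proj_norm_le_lebesgue_bound:
  assumes "nondeg_simplex n X" "\<forall>j\<le>n. X j \<in> unit_ball n" "lagrange_basis n X L0 L"
    "\<forall>x\<in>unit_ball n. (\<Sum>j\<le>n. \<bar>affine_fun n (L0 j) (L j) x\<bar>) \<le> K"
  shows "proj_norm n X \<le> K"
proof -
  have "cont_on_ball n (\<lambda>x. 0)" "supnorm n (\<lambda>x. 0) \<le> 1"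
    by (auto simp: cont_on_ball_def intro: supnorm_le)
  then show ?thesis
    unfolding proj_norm_def using supnorm_interp_le_lebesgue_bound[OF assms]
    by (intro cSup_least) auto
qed

lemma supnorm_interp_le_proj_norm:
  assumes nd: "nondeg_simplex n X" and vertices: "\<forall>j\<le>n. X j \<in> unit_ball n"
    and f: "cont_on_ball n f" "supnorm n f \<le> 1"
  shows "supnorm n (interp n X f) \<le> proj_norm n X"
proof -
  obtain L0 L where L: "lagrange_basis n X L0 L" using lagrange_basis_exists[OF nd] by blast
  have "\<forall>x\<in>unit_ball n. (\<Sum>j\<le>n. \<bar>affine_fun n (L0 j) (L j) x\<bar>)
          \<le> (\<Sum>j\<le>n. \<bar>L0 j\<bar> + L2_set (L j) {..<n})"
    by (auto intro!: sum_mono abs_affine_fun_le)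
  from supnorm_interp_le_lebesgue_bound[OF nd vertices L this]
  have "bdd_above {supnorm n (interp n X f) | f. cont_on_ball n f \<and> supnorm n f \<le> 1}"
    unfolding bdd_above_def by blast
  then show ?thesis unfolding proj_norm_def using f by (intro cSup_upper) auto
qed

section \<open>The lower bound\<close>

lemma L2_set_lagrange_gradient_ge:
  assumes n: "n \<ge> 1" and vertices: "\<forall>j\<le>n. X j \<in> unit_ball n"
    and L: "lagrange_basis n X L0 L" and j: "j \<le> n"
  shows "1/2 \<le> L2_set (L j) {..<n}"
proof -
  define k where "k = (if j = 0 then 1 else (0::nat))"
  have k: "k \<le> n" "k \<noteq> j" using n by (auto simp: k_def)
  have "affine_fun n (L0 j) (L j) (X j) - affine_fun n (L0 j) (L j) (X k) = 1"
    using L j k by (auto simp: lagrange_basis_def)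
  then have "(\<Sum>i<n. L j i * X j i) - (\<Sum>i<n. L j i * X k i) = 1" by (simp add: affine_fun_def)
  moreover have "\<bar>\<Sum>i<n. L j i * X j i\<bar> \<le> L2_set (L j) {..<n}"
    using abs_sum_mult_le_L2_set_unit_ball vertices j by blast
  moreover have "\<bar>\<Sum>i<n. L j i * X k i\<bar> \<le> L2_set (L j) {..<n}"
    using abs_sum_mult_le_L2_set_unit_ball vertices k by blast
  ultimately show ?thesis by linarith
qed

text \<open>Greedy choice of signs: \<open>s\<^sub>m\<close> is chosen so that the cross term
  \<open>2 s\<^sub>m \<langle>\<Sum>\<^sub>j\<^sub><\<^sub>m s\<^sub>j w\<^sub>j, w\<^sub>m\<rangle>\<close> is nonnegative.\<close>
lemma exists_signs_sum_sq_ge: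
  fixes w :: "nat \<Rightarrow> nat \<Rightarrow> real"
  shows "\<exists>s. (\<forall>j. \<bar>s j\<bar> = 1) \<and>
           (\<Sum>j<m. \<Sum>i<n. (w j i)\<^sup>2) \<le> (\<Sum>i<n. (\<Sum>j<m. s j * w j i)\<^sup>2)"
proof (induction m)
  case 0
  show ?case by (intro exI[of _ "\<lambda>_. 1"]) simp
next
  case (Suc m)
  then obtain s where s: "\<forall>j. \<bar>s j\<bar> = (1::real)"
    "(\<Sum>j<m. \<Sum>i<n. (w j i)\<^sup>2) \<le> (\<Sum>i<n. (\<Sum>j<m. s j * w j i)\<^sup>2)" by blast
  define V where "V i = (\<Sum>j<m. s j * w j i)" for i
  define \<sigma> where "\<sigma> = (if (\<Sum>i<n. V i * w m i) \<ge> 0 then 1 else (-1::real))"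
  define s' where "s' = s(m := \<sigma>)"
  have "(\<Sum>i<n. (V i + \<sigma> * w m i)\<^sup>2)
          = (\<Sum>i<n. (V i)\<^sup>2) + 2 * (\<sigma> * (\<Sum>i<n. V i * w m i)) + \<sigma>\<^sup>2 * (\<Sum>i<n. (w m i)\<^sup>2)"
    by (simp add: power2_sum sum.distrib sum_distrib_left algebra_simps power_mult_distrib)
  also have "\<sigma>\<^sup>2 = 1" by (simp add: \<sigma>_def)
  finally have "(\<Sum>i<n. (V i)\<^sup>2) + (\<Sum>i<n. (w m i)\<^sup>2) \<le> (\<Sum>i<n. (V i + \<sigma> * w m i)\<^sup>2)"
    by (simp add: \<sigma>_def)
  moreover have "(\<Sum>j<Suc m. s' j * w j i) = V i + \<sigma> * w m i" for i
    by (simp add: s'_def V_def)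
  ultimately have "(\<Sum>j<Suc m. \<Sum>i<n. (w j i)\<^sup>2) \<le> (\<Sum>i<n. (\<Sum>j<Suc m. s' j * w j i)\<^sup>2)"
    using s(2) by (simp add: V_def)
  moreover have "\<forall>j. \<bar>s' j\<bar> = 1" using s(1) by (simp add: s'_def \<sigma>_def)
  ultimately show ?case by blast
qed

lemma supnorm_affine_fun_le_proj_norm:
  assumes nd: "nondeg_simplex n X" and vertices: "\<forall>j\<le>n. X j \<in> unit_ball n"
    and bounded: "\<forall>j\<le>n. \<bar>affine_fun n c0 c (X j)\<bar> \<le> 1"
  shows "supnorm n (affine_fun n c0 c) \<le> proj_norm n X"
proof -
  define f where "f x = max (-1) (min 1 (affine_fun n c0 c x))" for x
  have "cont_on_ball n f"
    unfolding f_def by (intro cont_on_ball_clip cont_on_ball_affine_fun)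
  moreover have "supnorm n f \<le> 1" by (rule supnorm_le) (auto simp: f_def)
  moreover have "interp n X f = affine_fun n c0 c"
    using bounded by (intro interp_eqI[OF nd poly1_affine_fun]) (auto simp: f_def abs_le_iff)
  ultimately show ?thesis using supnorm_interp_le_proj_norm[OF nd vertices, of f] by simp
qed

lemma proj_norm_ge_sqrt:
  assumes n: "n \<ge> 1" and nd: "nondeg_simplex n X" and vertices: "\<forall>j\<le>n. X j \<in> unit_ball n"
  shows "sqrt (real n) / 2 \<le> proj_norm n X"
proof -
  obtain L0 L where L: "lagrange_basis n X L0 L" using lagrange_basis_exists[OF nd] by blast
  obtain s where s: "\<forall>j. \<bar>s j\<bar> = (1::real)"
    "(\<Sum>j\<le>n. \<Sum>i<n. (L j i)\<^sup>2) \<le> (\<Sum>i<n. (\<Sum>j\<le>n. s j * L j i)\<^sup>2)"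
    using exists_signs_sum_sq_ge[where m="Suc n" and w=L] by (auto simp: lessThan_Suc_atMost)
  define C where "C = (\<Sum>j\<le>n. s j * L0 j)"
  define W where "W = (\<lambda>i. \<Sum>j\<le>n. s j * L j i)"
  have "1/4 \<le> (\<Sum>i<n. (L j i)\<^sup>2)" if "j \<le> n" for j
  proof -
    have "sqrt (1/4) \<le> sqrt (\<Sum>i<n. (L j i)\<^sup>2)"
      using L2_set_lagrange_gradient_ge[OF n vertices L that] by (simp add: L2_set_def real_sqrt_divide)
    then show ?thesis by (simp only: real_sqrt_le_iff)
  qed
  then have "(\<Sum>j\<le>n. 1/4) \<le> (\<Sum>j\<le>n. \<Sum>i<n. (L j i)\<^sup>2)" by (intro sum_mono) auto
  then have "real n / 4 \<le> (\<Sum>i<n. (W i)\<^sup>2)" using s(2) by (simp add: W_def)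
  then have "sqrt (real n / 4) \<le> L2_set W {..<n}" by (simp add: L2_set_def)
  then have "sqrt (real n) / 2 \<le> L2_set W {..<n}" by (simp add: real_sqrt_divide)
  also have "\<dots> \<le> supnorm n (affine_fun n C W)" by (rule L2_set_le_supnorm_affine_fun)
  also have "\<dots> \<le> proj_norm n X"
  proof (rule supnorm_affine_fun_le_proj_norm[OF nd vertices], intro allI impI)
    fix k assume "k \<le> n"
    have "affine_fun n C W (X k) = s k"
      using sum_lagrange_basis_at_vertex[OF L \<open>k \<le> n\<close>, of s]
      by (simp add: sum_affine_fun C_def W_def)
    then show "\<bar>affine_fun n C W (X k)\<bar> \<le> 1" using s(1) by simp
  qed
  finally show ?thesis .
qed

section \<open>The upper bound: the simplex \<open>0, e\<^sub>1, \<dots>, e\<^sub>n\<close>\<close>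

text \<open>Vertex 0 is the origin and vertex \<open>i + 1\<close> is the unit vector \<open>e\<^sub>i\<close> (0-based coordinates).\<close>
definition std_simplex :: "nat \<Rightarrow> nat \<Rightarrow> real" where
  "std_simplex j i = (if j = Suc i then 1 else 0)"

text \<open>Its Lagrange basis: \<open>\<lambda>\<^sub>0 x = 1 - \<Sum>\<^sub>i x\<^sub>i\<close> and \<open>\<lambda>\<^sub>i\<^sub>+\<^sub>1 x = x\<^sub>i\<close>.\<close>
definition std_lagrange_const :: "nat \<Rightarrow> real" where
  "std_lagrange_const j = (if j = 0 then 1 else 0)"

definition std_lagrange_coeff :: "nat \<Rightarrow> nat \<Rightarrow> real" where
  "std_lagrange_coeff j i = (if j = 0 then -1 else if j = Suc i then 1 else 0)"

lemma sum_atMost_split_0: "(\<Sum>j\<le>n. g j) = g 0 + (\<Sum>i<n. g (Suc i))"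
  by (simp only: lessThan_Suc_atMost[symmetric] sum.lessThan_Suc_shift)

lemma sum_std_simplex:
  "(\<Sum>i<n. std_simplex k i * x i) = (if 0 < k \<and> k \<le> n then x (k - 1) else 0)"
proof (cases k)
  case 0 then show ?thesis by (simp add: std_simplex_def)
next
  case (Suc m)
  have "(\<Sum>i<n. std_simplex k i * x i) = (\<Sum>i<n. if i = m then x i else 0)"
    by (intro sum.cong) (auto simp: std_simplex_def Suc)
  then show ?thesis by (simp add: Suc)
qed

lemma std_simplex_mem_unit_ball: "std_simplex j \<in> unit_ball n" if "j \<le> n"
proof -
  have "(\<Sum>i<n. (std_simplex j i)\<^sup>2) = (\<Sum>i<n. std_simplex j i * 1)"
    by (intro sum.cong) (auto simp: std_simplex_def)
  also have "\<dots> \<le> 1" using sum_std_simplex[where x="\<lambda>_. 1"] by simp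
  finally show ?thesis using that by (auto simp: mem_unit_ball_iff std_simplex_def)
qed

lemma nondeg_std_simplex: "nondeg_simplex n std_simplex"
  unfolding nondeg_simplex_def
proof (intro allI impI)
  fix c :: "nat \<Rightarrow> real" and j
  assume h: "(\<Sum>j\<le>n. c j) = 0 \<and> (\<forall>i<n. (\<Sum>j\<le>n. c j * std_simplex j i) = 0)" and j: "j \<le> n"
  have c_Suc: "c (Suc i) = 0" if i: "i < n" for i
  proof -
    have "(\<Sum>j\<le>n. c j * std_simplex j i) = (\<Sum>j\<le>n. if j = Suc i then c j else 0)"
      by (intro sum.cong) (auto simp: std_simplex_def)
    then show ?thesis using h i by simp
  qed
  then have "c 0 = 0" using h by (simp add: sum_atMost_split_0)
  then show "c j = 0" using c_Suc j by (cases j) auto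
qed

lemma affine_fun_std_lagrange_0:
  "affine_fun n (std_lagrange_const 0) (std_lagrange_coeff 0) x = 1 - (\<Sum>i<n. x i)"
  by (simp add: affine_fun_def std_lagrange_const_def std_lagrange_coeff_def sum_negf)

lemma affine_fun_std_lagrange_Suc:
  assumes "m < n"
  shows "affine_fun n (std_lagrange_const (Suc m)) (std_lagrange_coeff (Suc m)) x = x m"
proof -
  have "(\<Sum>i<n. std_lagrange_coeff (Suc m) i * x i) = (\<Sum>i<n. if i = m then x i else 0)"
    by (intro sum.cong) (auto simp: std_lagrange_coeff_def)
  then show ?thesis using assms by (simp add: affine_fun_def std_lagrange_const_def)
qed

lemma lagrange_basis_std_simplex:
  "lagrange_basis n std_simplex std_lagrange_const std_lagrange_coeff"
  unfolding lagrange_basis_def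
proof (intro allI impI)
  fix j k assume j: "j \<le> n" and k: "k \<le> n"
  show "affine_fun n (std_lagrange_const j) (std_lagrange_coeff j) (std_simplex k)
          = (if k = j then 1 else 0)"
  proof (cases j)
    case 0
    have "(\<Sum>i<n. std_simplex k i) = (\<Sum>i<n. std_simplex k i * 1)" by simp
    also have "\<dots> = (if k = 0 then 0 else 1)" using k sum_std_simplex[where x="\<lambda>_. 1"] by simp
    finally show ?thesis using 0 by (simp add: affine_fun_std_lagrange_0)
  next
    case (Suc m)
    then show ?thesis using j by (simp add: affine_fun_std_lagrange_Suc std_simplex_def)
  qed
qed

lemma sum_abs_le_sqrt_on_unit_ball:
  assumes "x \<in> unit_ball n" shows "(\<Sum>i<n. \<bar>x i\<bar>) \<le> sqrt (real n)"
proof -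
  have "(\<Sum>i<n. \<bar>x i\<bar>) = (\<Sum>i<n. \<bar>(\<lambda>_. 1::real) i\<bar> * \<bar>x i\<bar>)" by simp
  also have "\<dots> \<le> L2_set (\<lambda>_. 1::real) {..<n} * L2_set x {..<n}" by (rule L2_set_mult_ineq)
  also have "\<dots> \<le> sqrt (real n) * 1"
  proof -
    have "L2_set x {..<n} \<le> 1" using assms by (simp add: unit_ball_def enorm_eq_L2_set)
    moreover have "L2_set (\<lambda>_. 1::real) {..<n} = sqrt (real n)" by (simp add: L2_set_def)
    ultimately show ?thesis by (simp add: mult_left_le)
  qed
  finally show ?thesis by simp
qed

lemma lebesgue_fun_std_simplex_le:
  assumes n: "n \<ge> 1" and x: "x \<in> unit_ball n"
  shows "(\<Sum>j\<le>n. \<bar>affine_fun n (std_lagrange_const j) (std_lagrange_coeff j) x\<bar>) \<le> 3 * sqrt (real n)"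
proof -
  have "(\<Sum>j\<le>n. \<bar>affine_fun n (std_lagrange_const j) (std_lagrange_coeff j) x\<bar>)
          = \<bar>1 - (\<Sum>i<n. x i)\<bar> + (\<Sum>i<n. \<bar>x i\<bar>)"
    by (simp add: sum_atMost_split_0 affine_fun_std_lagrange_0 affine_fun_std_lagrange_Suc)
  also have "\<dots> \<le> 1 + 2 * (\<Sum>i<n. \<bar>x i\<bar>)"
    using sum_abs[of x "{..<n}"] by linarith
  also have "\<dots> \<le> 1 + 2 * sqrt (real n)" using sum_abs_le_sqrt_on_unit_ball[OF x] by simp
  also have "\<dots> \<le> 3 * sqrt (real n)" using n by simp
  finally show ?thesis .
qed

lemma proj_norm_std_simplex_le:
  "n \<ge> 1 \<Longrightarrow> proj_norm n std_simplex \<le> 3 * sqrt (real n)"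
  by (rule proj_norm_le_lebesgue_bound[OF nondeg_std_simplex _ lagrange_basis_std_simplex])
    (auto intro: std_simplex_mem_unit_ball lebesgue_fun_std_simplex_le)

lemma theta_bounds:
  assumes n: "n \<ge> 1"
  shows "sqrt (real n) / 2 \<le> theta n" "theta n \<le> 3 * sqrt (real n)"
proof -
  define T where "T = {proj_norm n X | X. (\<forall>j\<le>n. X j \<in> unit_ball n) \<and> nondeg_simplex n X}"
  have std: "proj_norm n std_simplex \<in> T"
    unfolding T_def using std_simplex_mem_unit_ball nondeg_std_simplex by blast
  have lower: "\<forall>t\<in>T. sqrt (real n) / 2 \<le> t"
    unfolding T_def using proj_norm_ge_sqrt[OF n] by blast
  show "sqrt (real n) / 2 \<le> theta n"
    unfolding theta_def T_def[symmetric] using std lower by (intro cInf_greatest) auto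
  have "theta n \<le> proj_norm n std_simplex"
  proof (unfold theta_def T_def[symmetric], rule cInf_lower[OF std])
    show "bdd_below T" unfolding bdd_below_def using lower by blast
  qed
  then show "theta n \<le> 3 * sqrt (real n)" using proj_norm_std_simplex_le[OF n] by simp
qed

theorem corollary4:
  shows "\<exists>c1 c2 :: real. c1 > 0 \<and> c2 > 0 \<and>
           (\<forall>n::nat. n \<ge> 1 \<longrightarrow> c1 * sqrt (real n) \<le> theta n \<and> theta n \<le> c2 * sqrt (real n))"
proof (intro exI conjI allI impI)
  fix n :: nat assume "n \<ge> 1"
  show "1/2 * sqrt (real n) \<le> theta n" using theta_bounds(1)[OF \<open>n \<ge> 1\<close>] by simp
  show "theta n \<le> 3 * sqrt (real n)" using theta_bounds(2)[OF \<open>n \<ge> 1\<close>] .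
qed simp_all

end
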